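(* There exist universal constants $c,C>0$ such that for all $x,y\ge1$, \[ c\,\frac{x}{x+y}\le(xB(x,y))^{1/x}\le C\,\frac{x}{x+y}. \] Moreover, for all $k,r>1$ and all $p$ with $|p|\le(\min(r,k)-1)/2$, \[ 0\le\frac{d}{dp}\left(\frac1p\log\frac{B(k+p,r-p)}{B(k,r)}\right)\le\frac{1}{r-1}+\frac{1}{k-1}. \]
   Context: $B(x,y)=\int_0^1u^{x-1}(1-u)^{y-1}du=\Gamma(x)\Gamma(y)/\Gamma(x+y)$ is the Beta function; the function $p\mapsto\frac1p\log\frac{B(k+p,r-p)}{B(k,r)}$ is extended continuously at $p=0$. *)

theory Defs
  imports "HOL-Analysis.Analysis"
begin

definition beta_ratio_fun :: "real \<Rightarrow> real \<Rightarrow> real \<Rightarrow> real" where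
  "beta_ratio_fun k r p =
     (if p = 0 then Lim (at 0) (\<lambda>q. (1 / q) * ln (Beta (k + q) (r - q) / Beta k r))
      else (1 / p) * ln (Beta (k + p) (r - p) / Beta k r))"

end

theory Submission imports Defs begin

text \<open>
  Write \<open>u(t) = ln \<Gamma>(t) - (t ln t - t)\<close>. The mean value theorem for \<open>ln \<Gamma>\<close> on
  \<open>[t, t + 1]\<close> and \<open>\<Gamma>(t + 1) = t \<Gamma>(t)\<close> give \<open>ln t - 1/t \<le> \<psi>(t) \<le> ln t\<close>, so \<open>u\<close>
  decreases while \<open>u + ln\<close> increases. Expressing
  \<open>ln (x B(x,y)) = ln \<Gamma>(x+1) + ln \<Gamma>(y) - ln \<Gamma>(x+y)\<close> through \<open>u\<close>, these monotonicities
  keep \<open>ln (x B(x,y)) - x ln (x/(x+y))\<close> between \<open>-x\<close> and \<open>3x\<close>; dividing by \<open>x\<close> and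
  exponentiating gives \<open>c = e\<^sup>-\<^sup>1\<close> and \<open>C = e\<^sup>3\<close>.

  For the derivative, \<open>G(p) = ln (B(k+p, r-p) / B(k,r))\<close> vanishes at \<open>0\<close>, and Taylor's
  theorem turns the derivative \<open>(p G'(p) - G(p)) / p\<^sup>2\<close> of \<open>G(p)/p\<close> into \<open>G''(t)/2\<close> for
  some \<open>t\<close> between \<open>0\<close> and \<open>p\<close>. Here \<open>G'' = \<psi>'(k+t) + \<psi>'(r-t)\<close>, and
  \<open>0 \<le> \<psi>'(z) \<le> 1/(z-1)\<close> for \<open>z > 1\<close> because \<open>\<psi>(z) - \<psi>(z-1) = 1/(z-1)\<close> and \<open>\<psi>'\<close>
  decreases.
\<close>

lemma pos_real_not_nonpos_Int: "(z::real) > 0 \<Longrightarrow> z \<notin> \<int>\<^sub>\<le>\<^sub>0"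
  by (auto elim!: nonpos_Ints_cases)

lemma ln_Gamma_real_plus1: "(t::real) > 0 \<Longrightarrow> ln_Gamma (t + 1) = ln_Gamma t + ln t"
  by (simp add: ln_Gamma_real_pos Gamma_plus1 pos_real_not_nonpos_Int ln_mult_pos)

lemma Digamma_real_eq_ln_between:
  assumes "(t::real) > 0"
  obtains z where "t < z" "z < t + 1" "Digamma z = ln t"
proof -
  have "\<exists>z. t < z \<and> z < t + 1 \<and> ln_Gamma (t + 1) - ln_Gamma t = (t + 1 - t) * Digamma z"
    by (rule MVT2) (use assms in \<open>auto intro!: has_field_derivative_ln_Gamma_real\<close>)
  with that show ?thesis using ln_Gamma_real_plus1[OF assms] by auto
qed

lemma Digamma_real_le_ln: "(t::real) > 0 \<Longrightarrow> Digamma t \<le> ln t"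
  by (metis Digamma_real_eq_ln_between Digamma_real_mono less_imp_le)

lemma ln_minus_inverse_le_Digamma_real:
  assumes t: "(t::real) > 0"
  shows "ln t - 1 / t \<le> Digamma t"
proof -
  obtain z where z: "t < z" "z < t + 1" "Digamma z = ln t"
    using Digamma_real_eq_ln_between[OF t] .
  have "Digamma z \<le> Digamma (t + 1)"
    using t z by (intro Digamma_real_mono) auto
  also have "Digamma (t + 1) = Digamma t + 1 / t"
    using Polygamma_plus1[of t 0] t by simp
  finally show ?thesis using z by simp
qed

definition stirling_remainder :: "real \<Rightarrow> real" where
  "stirling_remainder t = ln_Gamma t - (t * ln t - t)"

lemma stirling_remainder_1: "stirling_remainder 1 = 1"
  by (simp add: stirling_remainder_def ln_Gamma_real_pos)

lemma has_real_derivative_stirling_remainder: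
  "t > 0 \<Longrightarrow> (stirling_remainder has_real_derivative Digamma t - ln t) (at t)"
  unfolding stirling_remainder_def[abs_def]
  by (auto intro!: derivative_eq_intros has_field_derivative_ln_Gamma_real)

lemma stirling_remainder_antimono:
  assumes "0 < a" "a \<le> b"
  shows "stirling_remainder b \<le> stirling_remainder a"
proof -
  have "- stirling_remainder a \<le> - stirling_remainder b"
  proof (rule deriv_nonneg_imp_mono[where g = "\<lambda>t. - stirling_remainder t"])
    fix t assume "t \<in> {a..b}"
    hence t: "t > 0" using assms by auto
    show "((\<lambda>t. - stirling_remainder t) has_real_derivative - (Digamma t - ln t)) (at t)"
      using has_real_derivative_stirling_remainder[OF t] by (rule DERIV_minus)
    show "- (Digamma t - ln t) \<ge> 0"
      using Digamma_real_le_ln[OF t] by simp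
  qed (use assms in auto)
  thus ?thesis by simp
qed

lemma stirling_remainder_plus_ln_mono:
  assumes "0 < a" "a \<le> b"
  shows "stirling_remainder a + ln a \<le> stirling_remainder b + ln b"
proof (rule deriv_nonneg_imp_mono[where g = "\<lambda>t. stirling_remainder t + ln t"])
  fix t assume "t \<in> {a..b}"
  hence t: "t > 0" using assms by auto
  show "((\<lambda>t. stirling_remainder t + ln t) has_real_derivative Digamma t - ln t + 1 / t) (at t)"
    using t by (auto intro!: derivative_eq_intros has_real_derivative_stirling_remainder)
  show "Digamma t - ln t + 1 / t \<ge> 0"
    using ln_minus_inverse_le_Digamma_real[OF t] by simp
qed (use assms in auto)

lemma ln_times_Beta_real:
  assumes "(x::real) > 0" "y > 0"
  shows "ln (x * Beta x y) = ln_Gamma (x + 1) + ln_Gamma y - ln_Gamma (x + y)"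
proof -
  have "x * Beta x y = Gamma (x + 1) * Gamma y / Gamma (x + y)"
    using assms by (simp add: Beta_def Gamma_plus1 pos_real_not_nonpos_Int)
  thus ?thesis
    using assms by (simp add: ln_divide_pos ln_mult_pos ln_Gamma_real_pos)
qed

lemma ln_add_minus_ln_le:
  fixes t h :: real
  assumes "t > 0" "t + h > 0"
  shows "ln (t + h) - ln t \<le> h / t"
proof -
  have "ln (t + h) - ln t = ln ((t + h) / t)"
    using assms by (simp add: ln_divide_pos)
  also have "\<dots> \<le> (t + h) / t - 1"
    using assms by (intro ln_le_minus_one) simp
  also have "\<dots> = h / t"
    using assms by (simp add: field_simps)
  finally show ?thesis .
qed

lemma ln_times_Beta_real_bounds:
  fixes x y :: real
  assumes x: "x \<ge> 1" and y: "y \<ge> 1"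
  shows "- x \<le> ln (x * Beta x y) - x * ln (x / (x + y))"
    and "ln (x * Beta x y) - x * ln (x / (x + y)) \<le> 3 * x"
proof -
  define u where "u = stirling_remainder"
  have expand: "ln (x * Beta x y) - x * ln (x / (x + y)) =
      u (x + 1) + (u y - u (x + y)) + x * (ln (x + 1) - ln x) + ln (x + 1) - 1
      - y * (ln (x + y) - ln y)"
    using x y by (simp add: ln_times_Beta_real ln_divide_pos u_def stirling_remainder_def
                    algebra_simps)
  have u_x: "1 - ln (x + 1) \<le> u (x + 1)" "u (x + 1) \<le> 1"
    using stirling_remainder_plus_ln_mono[of 1 "x + 1"] stirling_remainder_antimono[of 1 "x + 1"]
      x by (simp_all add: u_def stirling_remainder_1)
  have u_y: "0 \<le> u y - u (x + y)" "u y - u (x + y) \<le> ln (x + y) - ln y"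
    using stirling_remainder_antimono[of y "x + y"] stirling_remainder_plus_ln_mono[of y "x + y"]
      x y by (simp_all add: u_def)
  have ln_x: "0 \<le> x * (ln (x + 1) - ln x)" "x * (ln (x + 1) - ln x) \<le> 1"
    using ln_add_minus_ln_le[of x 1] x by (simp_all add: field_simps)
  have ln_xy: "ln (x + y) - ln y \<le> x / y"
    using ln_add_minus_ln_le[of y x] x y by (simp add: add.commute)
  have ln_y: "0 \<le> y * (ln (x + y) - ln y)" "y * (ln (x + y) - ln y) \<le> x"
    "ln (x + y) - ln y \<le> x"
  proof -
    show "y * (ln (x + y) - ln y) \<le> x" using ln_xy y by (simp add: field_simps)
    have "x / y \<le> x" using x y by (simp add: field_simps)
    with ln_xy show "ln (x + y) - ln y \<le> x" by linarith
  qed (use x y in simp)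
  have "ln (x + 1) \<le> x" using ln_add_minus_ln_le[of 1 x] x by (simp add: add.commute)
  note bounds = this expand u_x u_y ln_x ln_y x
  show "- x \<le> ln (x * Beta x y) - x * ln (x / (x + y))"
    using bounds by linarith
  show "ln (x * Beta x y) - x * ln (x / (x + y)) \<le> 3 * x"
    using bounds by linarith
qed

lemma root_times_Beta_real_bounds:
  fixes x y :: real
  assumes x: "x \<ge> 1" and y: "y \<ge> 1"
  shows "exp (-1) * (x / (x + y)) \<le> (x * Beta x y) powr (1 / x)"
    and "(x * Beta x y) powr (1 / x) \<le> exp 3 * (x / (x + y))"
proof -
  define L where "L = ln (x * Beta x y)"
  define R where "R = ln (x / (x + y))"
  have "Beta x y > 0" using x y by (simp add: Beta_def)
  hence root: "(x * Beta x y) powr (1 / x) = exp (L / x)"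
    using x by (simp add: powr_def L_def)
  have ratio: "x / (x + y) = exp R"
    using x y by (simp add: R_def)
  have "- x \<le> L - x * R" "L - x * R \<le> 3 * x"
    using ln_times_Beta_real_bounds[OF x y] by (simp_all add: L_def R_def)
  hence "-1 + R \<le> L / x" "L / x \<le> 3 + R"
    using x by (simp_all add: field_simps)
  thus "exp (-1) * (x / (x + y)) \<le> (x * Beta x y) powr (1 / x)"
    and "(x * Beta x y) powr (1 / x) \<le> exp 3 * (x / (x + y))"
    unfolding root ratio exp_add[symmetric] by simp_all
qed

lemma Taylor_second_order:
  fixes f f' f'' :: "real \<Rightarrow> real"
  assumes f': "\<And>t. min x c \<le> t \<Longrightarrow> t \<le> max x c \<Longrightarrow> (f has_real_derivative f' t) (at t)"
    and f'': "\<And>t. min x c \<le> t \<Longrightarrow> t \<le> max x c \<Longrightarrow> (f' has_real_derivative f'' t) (at t)"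
    and "x \<noteq> c"
  shows "\<exists>t. min x c < t \<and> t < max x c \<and> f x = f c + f' c * (x - c) + f'' t / 2 * (x - c)\<^sup>2"
proof -
  define diff where "diff = (\<lambda>n::nat. if n = 0 then f else if n = 1 then f' else f'')"
  have "\<exists>t. (if x < c then x < t \<and> t < c else c < t \<and> t < x) \<and>
      f x = (\<Sum>m<2. diff m c / fact m * (x - c) ^ m) + diff 2 t / fact 2 * (x - c)\<^sup>2"
  proof (rule Taylor[where a = "min x c" and b = "max x c"])
    show "\<forall>m t. m < 2 \<and> min x c \<le> t \<and> t \<le> max x c \<longrightarrow> DERIV (diff m) t :> diff (Suc m) t"
      using f' f'' by (auto simp: diff_def less_2_cases_iff)
  qed (use \<open>x \<noteq> c\<close> in \<open>auto simp: diff_def\<close>)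
  thus ?thesis
    by (auto simp: diff_def eval_nat_numeral split: if_splits)
qed

lemma Taylor_second_order_ball:
  fixes f f' f'' :: "real \<Rightarrow> real"
  assumes f': "\<And>y. \<bar>y\<bar> < \<delta> \<Longrightarrow> (f has_real_derivative f' y) (at y)"
    and f'': "\<And>y. \<bar>y\<bar> < \<delta> \<Longrightarrow> (f' has_real_derivative f'' y) (at y)"
    and "\<bar>x\<bar> < \<delta>" "\<bar>c\<bar> < \<delta>" "x \<noteq> c"
  shows "\<exists>t. min x c < t \<and> t < max x c \<and> f x = f c + f' c * (x - c) + f'' t / 2 * (x - c)\<^sup>2"
proof (rule Taylor_second_order)
  have "min x c \<le> t \<Longrightarrow> t \<le> max x c \<Longrightarrow> \<bar>t\<bar> < \<delta>" for t
    using assms(3,4) by linarith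
  with f' f'' show "\<And>t. min x c \<le> t \<Longrightarrow> t \<le> max x c \<Longrightarrow> (f has_real_derivative f' t) (at t)"
    and "\<And>t. min x c \<le> t \<Longrightarrow> t \<le> max x c \<Longrightarrow> (f' has_real_derivative f'' t) (at t)"
    by blast+
qed (fact \<open>x \<noteq> c\<close>)

lemma has_real_derivative_slope_at_origin:
  fixes f f' f'' :: "real \<Rightarrow> real"
  assumes f0: "f 0 = 0"
    and f': "\<And>y. \<bar>y\<bar> < \<delta> \<Longrightarrow> (f has_real_derivative f' y) (at y)"
    and f'': "\<And>y. \<bar>y\<bar> < \<delta> \<Longrightarrow> (f' has_real_derivative f'' y) (at y)"
    and cont: "isCont f'' 0"
    and \<delta>: "\<delta> > 0"
  shows "((\<lambda>y. if y = 0 then f' 0 else f y / y) has_real_derivative f'' 0 / 2) (at 0)"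
proof -
  define H where "H = (\<lambda>y. if y = 0 then f' 0 else f y / y)"
  have "\<exists>t. \<bar>t\<bar> \<le> \<bar>y\<bar> \<and> f y = f' 0 * y + f'' t / 2 * y\<^sup>2"
    if y: "y \<noteq> 0" "\<bar>y\<bar> < \<delta>" for y
  proof -
    obtain t where "min y 0 < t" "t < max y 0"
        "f y = f 0 + f' 0 * (y - 0) + f'' t / 2 * (y - 0)\<^sup>2"
      using Taylor_second_order_ball[where \<delta> = \<delta> and x = y and c = 0, OF f' f''] y \<delta> by auto
    thus ?thesis using f0 by (intro exI[of _ t]) auto
  qed
  then obtain \<tau> where \<tau>: "\<And>y. y \<noteq> 0 \<Longrightarrow> \<bar>y\<bar> < \<delta> \<Longrightarrow> \<bar>\<tau> y\<bar> \<le> \<bar>y\<bar>"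
      "\<And>y. y \<noteq> 0 \<Longrightarrow> \<bar>y\<bar> < \<delta> \<Longrightarrow> f y = f' 0 * y + f'' (\<tau> y) / 2 * y\<^sup>2"
    by metis
  have near: "eventually (\<lambda>y. y \<noteq> 0 \<and> \<bar>y\<bar> < \<delta>) (at (0::real))"
    using \<delta> unfolding eventually_at by (intro exI[of _ \<delta>]) (auto simp: dist_real_def)
  have "(\<tau> \<longlongrightarrow> 0) (at 0)"
  proof (rule Lim_null_comparison)
    show "eventually (\<lambda>y. norm (\<tau> y) \<le> \<bar>y\<bar>) (at 0)"
      using near by eventually_elim (simp add: \<tau>(1))
  qed (rule tendsto_rabs_zero[OF tendsto_ident_at])
  hence "((\<lambda>y. f'' (\<tau> y) / 2) \<longlongrightarrow> f'' 0 / 2) (at 0)"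
    by (intro tendsto_divide isCont_tendsto_compose[OF cont]) auto
  moreover have "eventually (\<lambda>y. f'' (\<tau> y) / 2 = (H y - H 0) / (y - 0)) (at 0)"
    using near
  proof eventually_elim
    case (elim y)
    thus ?case
      using \<tau>(2)[of y] by (simp add: H_def field_simps power2_eq_square)
  qed
  ultimately have "(H has_real_derivative f'' 0 / 2) (at 0)"
    unfolding has_field_derivative_iff by (rule Lim_transform_eventually)
  thus ?thesis unfolding H_def .
qed

lemma has_real_derivative_slope_at_zero:
  fixes f f' f'' :: "real \<Rightarrow> real"
  assumes f0: "f 0 = 0"
    and f': "\<And>y. \<bar>y\<bar> < \<delta> \<Longrightarrow> (f has_real_derivative f' y) (at y)"
    and f'': "\<And>y. \<bar>y\<bar> < \<delta> \<Longrightarrow> (f' has_real_derivative f'' y) (at y)"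
    and cont: "isCont f'' 0"
    and p: "\<bar>p\<bar> < \<delta>"
  obtains t where "\<bar>t\<bar> \<le> \<bar>p\<bar>"
    "((\<lambda>y. if y = 0 then f' 0 else f y / y) has_real_derivative f'' t / 2) (at p)"
proof -
  have \<delta>: "\<delta> > 0" using p by linarith
  show ?thesis
  proof (cases "p = 0")
    case True
    with \<delta> that show ?thesis
      using has_real_derivative_slope_at_origin[OF f0 f' f'' cont] by auto
  next
    case False
    define H where "H = (\<lambda>y. if y = 0 then f' 0 else f y / y)"
    obtain t where t: "min 0 p < t" "t < max 0 p"
        and T: "f 0 = f p + f' p * (0 - p) + f'' t / 2 * (0 - p)\<^sup>2"
      using Taylor_second_order_ball[where \<delta> = \<delta> and x = 0 and c = p, OF f' f''] p False \<delta>
      by auto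
    have "eventually (\<lambda>y. y \<noteq> 0) (nhds p)"
      using False by (intro t1_space_nhds)
    hence ev: "eventually (\<lambda>y. f y / y = H y) (nhds p)"
      by eventually_elim (simp add: H_def)
    have "((\<lambda>y. f y / y) has_real_derivative (f' p * p - f p * 1) / (p * p)) (at p)"
      using f'[OF p] False by (intro DERIV_divide DERIV_ident) auto
    also have "(f' p * p - f p * 1) / (p * p) = f'' t / 2"
      using T f0 False by (simp add: field_simps power2_eq_square)
    finally have "(H has_real_derivative f'' t / 2) (at p)"
      using DERIV_cong_ev[OF refl ev refl] by blast
    moreover have "\<bar>t\<bar> \<le> \<bar>p\<bar>" using t by linarith
    ultimately show ?thesis using that unfolding H_def by blast
  qed
qed

definition ln_Beta_ratio :: "real \<Rightarrow> real \<Rightarrow> real \<Rightarrow> real" where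
  "ln_Beta_ratio k r p = ln_Gamma (k + p) + ln_Gamma (r - p) - ln_Gamma k - ln_Gamma r"

lemma ln_Beta_ratio_0 [simp]: "ln_Beta_ratio k r 0 = 0"
  by (simp add: ln_Beta_ratio_def)

lemma ln_Beta_ratio_eq:
  assumes "\<bar>p\<bar> < min k r"
  shows "ln (Beta (k + p) (r - p) / Beta k r) = ln_Beta_ratio k r p"
proof -
  have pos: "k + p > 0" "r - p > 0" "k > 0" "r > 0"
    using assms by auto
  hence "Gamma (k + r) \<noteq> 0" "Gamma k \<noteq> 0" "Gamma r \<noteq> 0"
    by (simp_all add: Gamma_eq_zero_iff pos_real_not_nonpos_Int)
  hence "Beta (k + p) (r - p) / Beta k r = Gamma (k + p) * Gamma (r - p) / (Gamma k * Gamma r)"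
    by (simp add: Beta_def field_simps)
  thus ?thesis
    using pos by (simp add: ln_Beta_ratio_def ln_Gamma_real_pos ln_divide_pos ln_mult_pos)
qed

lemma has_real_derivative_ln_Beta_ratio:
  assumes "k + p > 0" "r - p > 0"
  shows "(ln_Beta_ratio k r has_real_derivative Digamma (k + p) - Digamma (r - p)) (at p)"
proof -
  have "((\<lambda>p. ln_Gamma (k + p) + ln_Gamma (r - p) - ln_Gamma k - ln_Gamma r) has_real_derivative
      Digamma (k + p) * (0 + 1) + Digamma (r - p) * (0 - 1) - 0 - 0) (at p)"
    using assms
    by (intro derivative_intros DERIV_chain2[OF has_field_derivative_ln_Gamma_real]) auto
  thus ?thesis unfolding ln_Beta_ratio_def[abs_def] by simp
qed

lemma has_real_derivative_Digamma_shift_diff: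
  assumes "k + p > 0" "r - p > 0"
  shows "((\<lambda>p. Digamma (k + p) - Digamma (r - p)) has_real_derivative
      Polygamma 1 (k + p) + Polygamma 1 (r - p)) (at p)"
proof -
  have Digamma: "(Digamma has_real_derivative Polygamma 1 z) (at z)" if "z > 0" for z :: real
    using has_field_derivative_Polygamma[of z 0] that pos_real_not_nonpos_Int by simp
  have "((\<lambda>p. Digamma (k + p) - Digamma (r - p)) has_real_derivative
      Polygamma 1 (k + p) * (0 + 1) - Polygamma 1 (r - p) * (0 - 1)) (at p)"
    using assms by (intro derivative_intros DERIV_chain2[OF Digamma]) auto
  thus ?thesis by simp
qed

lemma beta_ratio_fun_eq:
  assumes "\<bar>p\<bar> < min k r"
  shows "beta_ratio_fun k r p =
    (if p = 0 then Digamma k - Digamma r else ln_Beta_ratio k r p / p)"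
proof (cases "p = 0")
  case False
  thus ?thesis using assms by (simp add: beta_ratio_fun_def ln_Beta_ratio_eq)
next
  case True
  have "k > 0" "r > 0" using assms by auto
  hence "(ln_Beta_ratio k r has_real_derivative Digamma k - Digamma r) (at 0)"
    using has_real_derivative_ln_Beta_ratio[of k 0 r] by simp
  hence "((\<lambda>q. ln_Beta_ratio k r q / q) \<longlongrightarrow> Digamma k - Digamma r) (at 0)"
    by (simp add: has_field_derivative_iff)
  moreover have "eventually (\<lambda>q. \<bar>q\<bar> < min k r) (at (0::real))"
    using assms unfolding eventually_at
    by (intro exI[of _ "min k r"]) (auto simp: dist_real_def)
  hence "eventually (\<lambda>q. ln_Beta_ratio k r q / q =
      (1 / q) * ln (Beta (k + q) (r - q) / Beta k r)) (at 0)"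
    by eventually_elim (use assms in \<open>simp add: ln_Beta_ratio_eq\<close>)
  ultimately have "((\<lambda>q. (1 / q) * ln (Beta (k + q) (r - q) / Beta k r))
      \<longlongrightarrow> Digamma k - Digamma r) (at 0)"
    by (rule Lim_transform_eventually)
  thus ?thesis using True by (simp add: beta_ratio_fun_def tendsto_Lim)
qed

lemma has_real_derivative_beta_ratio_fun:
  assumes p: "\<bar>p\<bar> < min k r"
  obtains t where "\<bar>t\<bar> \<le> \<bar>p\<bar>"
    "(beta_ratio_fun k r has_real_derivative (Polygamma 1 (k + t) + Polygamma 1 (r - t)) / 2) (at p)"
proof -
  have "k > 0" "r > 0" using p by auto
  have "(ln_Beta_ratio k r has_real_derivative Digamma (k + q) - Digamma (r - q)) (at q)"
    if "\<bar>q\<bar> < min k r" for q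
    by (rule has_real_derivative_ln_Beta_ratio) (use that in auto)
  moreover have "((\<lambda>q. Digamma (k + q) - Digamma (r - q)) has_real_derivative
      Polygamma 1 (k + q) + Polygamma 1 (r - q)) (at q)"
    if "\<bar>q\<bar> < min k r" for q
    by (rule has_real_derivative_Digamma_shift_diff) (use that in auto)
  moreover have "isCont (\<lambda>q. Polygamma 1 (k + q) + Polygamma 1 (r - q)) 0"
    using \<open>k > 0\<close> \<open>r > 0\<close> by (intro continuous_intros pos_real_not_nonpos_Int) auto
  ultimately obtain t where t: "\<bar>t\<bar> \<le> \<bar>p\<bar>"
    and deriv: "((\<lambda>q. if q = 0 then Digamma (k + 0) - Digamma (r - 0) else ln_Beta_ratio k r q / q)
        has_real_derivative (Polygamma 1 (k + t) + Polygamma 1 (r - t)) / 2) (at p)"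
    by (rule has_real_derivative_slope_at_zero[where f = "ln_Beta_ratio k r"
        and f' = "\<lambda>q. Digamma (k + q) - Digamma (r - q)"
        and f'' = "\<lambda>q. Polygamma 1 (k + q) + Polygamma 1 (r - q)", OF ln_Beta_ratio_0 _ _ _ p])
  have "open {q :: real. \<bar>q\<bar> < min k r}"
    by (intro open_Collect_less continuous_intros)
  hence "eventually (\<lambda>q. q \<in> {q. \<bar>q\<bar> < min k r}) (nhds p)"
    using p by (intro eventually_nhds_in_open) auto
  hence "eventually (\<lambda>q. (if q = 0 then Digamma (k + 0) - Digamma (r - 0)
      else ln_Beta_ratio k r q / q) = beta_ratio_fun k r q) (nhds p)"
    by eventually_elim (simp add: beta_ratio_fun_eq)
  from DERIV_cong_ev[OF refl this refl] deriv
  have "(beta_ratio_fun k r has_real_derivative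
      (Polygamma 1 (k + t) + Polygamma 1 (r - t)) / 2) (at p)"
    by simp
  with t that show ?thesis by blast
qed

lemma Polygamma_1_real_le:
  assumes z: "(z::real) > 1"
  shows "Polygamma 1 z \<le> 1 / (z - 1)"
proof -
  have "\<exists>e. z - 1 < e \<and> e < z \<and> Digamma z - Digamma (z - 1) = (z - (z - 1)) * Polygamma 1 e"
    by (rule MVT2) (use z in \<open>auto intro!: has_field_derivative_Polygamma pos_real_not_nonpos_Int\<close>)
  then obtain e where e: "z - 1 < e" "e < z" "Digamma z - Digamma (z - 1) = Polygamma 1 e"
    by auto
  have "Digamma (z - 1 + 1) = Digamma (z - 1) + 1 / (z - 1)"
    using Polygamma_plus1[of "z - 1" 0] z by simp
  hence "Polygamma 1 e = 1 / (z - 1)" using e by simp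
  moreover have "Polygamma 1 z < Polygamma 1 e"
    using e z by (intro Polygamma_real_strict_antimono) auto
  ultimately show ?thesis by simp
qed

lemma Polygamma_1_real_bounds:
  assumes k: "(k::real) > 1" and t: "\<bar>t\<bar> \<le> (k - 1) / 2"
  shows "0 \<le> Polygamma 1 (k + t)" "Polygamma 1 (k + t) \<le> 2 / (k - 1)"
proof -
  have z: "k + t > 1" using k t by (simp add: abs_le_iff)
  thus "0 \<le> Polygamma 1 (k + t)"
    by (intro less_imp_le Polygamma_real_odd_pos pos_real_not_nonpos_Int) auto
  have "Polygamma 1 (k + t) \<le> 1 / (k + t - 1)"
    using Polygamma_1_real_le[OF z] .
  also have "\<dots> \<le> 1 / ((k - 1) / 2)"
    using z k t by (intro divide_left_mono) auto
  finally show "Polygamma 1 (k + t) \<le> 2 / (k - 1)" by simp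
qed

theorem lemma1:
  shows "(\<exists>c C :: real. c > 0 \<and> C > 0 \<and>
           (\<forall>x y :: real. x \<ge> 1 \<longrightarrow> y \<ge> 1 \<longrightarrow>
              c * (x / (x + y)) \<le> (x * Beta x y) powr (1 / x) \<and>
              (x * Beta x y) powr (1 / x) \<le> C * (x / (x + y))))
       \<and> (\<forall>k r p :: real. k > 1 \<longrightarrow> r > 1 \<longrightarrow> \<bar>p\<bar> \<le> (min r k - 1) / 2 \<longrightarrow>
            (\<exists>D. (beta_ratio_fun k r has_real_derivative D) (at p) \<and>
                 0 \<le> D \<and> D \<le> 1 / (r - 1) + 1 / (k - 1)))"
proof (intro conjI allI impI, goal_cases)
  case 1
  show ?case
    using root_times_Beta_real_bounds by (intro exI[of _ "exp (-1)"] exI[of _ "exp 3"]) auto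
next
  case (2 k r p)
  hence k: "k > 1" and r: "r > 1" and p: "\<bar>p\<bar> \<le> (min r k - 1) / 2" by simp_all
  have "\<bar>p\<bar> < min k r" using p k r by auto
  then obtain t where t: "\<bar>t\<bar> \<le> \<bar>p\<bar>" and deriv:
      "(beta_ratio_fun k r has_real_derivative (Polygamma 1 (k + t) + Polygamma 1 (r - t)) / 2) (at p)"
    by (rule has_real_derivative_beta_ratio_fun)
  have "\<bar>t\<bar> \<le> (k - 1) / 2" "\<bar>-t\<bar> \<le> (r - 1) / 2" using t p by auto
  from Polygamma_1_real_bounds[OF k this(1)] Polygamma_1_real_bounds[OF r this(2)]
  show ?case
    using deriv by (intro exI[of _ "(Polygamma 1 (k + t) + Polygamma 1 (r - t)) / 2"]) auto
qed

end
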